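(* Let $S,T$ be two causal teams over a signature $\sigma$, or two generalized causal teams over $\sigma$, with $T$ nonempty. Then $S\models\Xi^T$ if and only if $T\not\preccurlyeq S$ (with $\models^c$, respectively $\models^g$).
   Context: A signature $\sigma=(\mathrm{Dom},\mathrm{Ran})$: $\mathrm{Dom}$ nonempty finite set of variables, each with nonempty finite range $\mathrm{Ran}(X)$; $\mathbf X=\mathbf x$ abbreviates $X_1=x_1\wedge\dots\wedge X_n=x_n$ ($\mathbf x\in\prod\mathrm{Ran}(X_i)$), inconsistent if it contains $X=x,X=x'$ with $x\ne x'$. ${=}(V)$ is the constancy atom; $\bot$ abbreviates $X=x\wedge\neg(X=x)$; $\alpha\supset\beta$ abbreviates $\neg\alpha\vee\beta$; empty $\vee$-disjunction is $\bot$. Systems of functions $\mathcal F$: for each $V\in\mathrm{En}(\mathcal F)\subseteq\mathrm{Dom}$ parents $PA^{\mathcal F}_V\subseteq\mathrm{Dom}\setminus\{V\}$ and $\mathcal F_V:\mathrm{Ran}(PA^{\mathcal F}_V)\to\mathrm{Ran}(V)$; $\mathrm{Ex}(\mathcal F)=\mathrm{Dom}\setminus\mathrm{En}(\mathcal F)$; only recursive (acyclic parent graph), forming $\mathbb F_\sigma$. Assignments ($s(X)\in\mathrm{Ran}(X)$) form $\mathbb A_\sigma$; $s$ compatible with $\mathcal F$ if $s(V)=\mathcal F_V(s(PA^{\mathcal F}_V))$ for $V\in\mathrm{En}(\mathcal F)$. For consistent $\mathbf X=\mathbf x$: $\mathcal F_{\mathbf X=\mathbf x}$ restricts $\mathcal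 F$ to $\mathrm{En}(\mathcal F)\setminus\mathbf X$; $s^{\mathcal F}_{\mathbf X=\mathbf x}$: $X_i\mapsto x_i$, $V\mapsto s(V)$ on $\mathrm{Ex}(\mathcal F)\setminus\mathbf X$, $V\mapsto\mathcal F_V(s^{\mathcal F}_{\mathbf X=\mathbf x}(PA^{\mathcal F}_V))$ on $\mathrm{En}(\mathcal F)\setminus\mathbf X$. Causal team $T=(T^-,\mathcal F)$ ($T^-$ compatible assignments; empty team components identified as $\emptyset$); causal subteams $(S^-,\mathcal F)$, $S^-\subseteq T^-$; $T_{\mathbf X=\mathbf x}=(\{s^{\mathcal F}_{\mathbf X=\mathbf x}:s\in T^-\},\mathcal F_{\mathbf X=\mathbf x})$; $\models^c$: $T\models X=x$ iff $s(X)=x$ for all $s\in T^-$; $T\models{=}(V)$ iff $s(V)=s'(V)$ for all $s,s'\in T^-$; $T\models\neg\alpha$ iff $(\{s\},\mathcal F)\not\models\alpha$ for all $s\in T^-$; $\wedge$ classical; $T\models\varphi\vee\psi$ iff causal subteams $T_1,T_2$ exist with $T_1^-\cup T_2^-=T^-$, $T_1\models\varphi$, $T_2\models\psi$; $T\models\mathbf X=\mathbf x\;\Box\!\!\rightarrow\varphi$ iff $\mathbf X=\mathbf x$ inconsistent or $T_{\mathbf X=\mathbf x}\models\varphi$. Generalized causal team: a set $T$ of compatible pairs $(s,\mathcal F)$, $\mathcal F\in\mathbb F_\sigma$; subteams are subsets; $T^-=\{s:(s,\mathcal F)\in T\}$; $T_{\mathbf X=\mathbf x}=\{(s^{\mathcal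 F}_{\mathbf X=\mathbf x},\mathcal F_{\mathbf X=\mathbf x}):(s,\mathcal F)\in T\}$; $\models^g$: same clauses except $T\models\neg\alpha$ iff $\{(s,\mathcal F)\}\not\models\alpha$ for all $(s,\mathcal F)\in T$, and $T\models\varphi\vee\psi$ iff $T=T_1\cup T_2$ with $T_1\models\varphi$, $T_2\models\psi$. $\mathrm{Cn}(\mathcal F)=\{V\in\mathrm{En}(\mathcal F):\mathcal F_V\text{ constant}\}$; $\mathcal F_V\sim\mathcal G_V$ iff $\mathcal F_V(\mathbf x\mathbf y)=\mathcal G_V(\mathbf x\mathbf z)$ for all $\mathbf x\in\mathrm{Ran}(PA^{\mathcal F}_V\cap PA^{\mathcal G}_V)$, $\mathbf y\in\mathrm{Ran}(PA^{\mathcal F}_V\setminus PA^{\mathcal G}_V)$, $\mathbf z\in\mathrm{Ran}(PA^{\mathcal G}_V\setminus PA^{\mathcal F}_V)$; $\mathcal F\sim\mathcal G$ iff $\mathrm{En}(\mathcal F)\setminus\mathrm{Cn}(\mathcal F)=\mathrm{En}(\mathcal G)\setminus\mathrm{Cn}(\mathcal G)$ and $\mathcal F_V\sim\mathcal G_V$ for each such $V$. Nonempty causal teams: $(T^-,\mathcal F)\approx(S^-,\mathcal G)$ iff $T^-=S^-$, $\mathcal F\sim\mathcal G$. Generalized: $T^{\mathcal F}=\{(s,\mathcal G)\in T:\mathcal G\sim\mathcal F\}$, $S\approx T$ iff $(S^{\mathcal F})^-=(T^{\mathcal F})^-$ for all $\mathcal F$; on pairs $(s,\mathcal F)\approx(t,\mathcal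 G)$ iff $s=t$ and $\mathcal F\sim\mathcal G$, and $T/_{\approx}$ is the set of $\approx$-classes of elements of $T$. $S\preccurlyeq T$ iff $S\approx R$ for some causal subteam $R$ of $T$ ($\emptyset\preccurlyeq T$ always). For a causal team $T=(T^-,\mathcal F)$, $T^g=\{(s,\mathcal F):s\in T^-\}$. Formulas: $\Theta^{A}:=\bigvee_{s\in A}\bigwedge_{V\in\mathrm{Dom}}V=s(V)$ for $A\subseteq\mathbb A_\sigma$. With $\mathbf W_V$ listing $\mathrm{Dom}\setminus\{V\}$: $\Phi^{\mathcal F}:=\bigwedge_{V\in\mathrm{En}(\mathcal F)\setminus\mathrm{Cn}(\mathcal F)}\eta(V)\wedge\bigwedge_{V\notin\mathrm{En}(\mathcal F)\setminus\mathrm{Cn}(\mathcal F)}\xi(V)$, $\eta(V)$ the conjunction of all $(\mathbf W=\mathbf w\wedge PA^{\mathcal F}_V=\mathbf p)\;\Box\!\!\rightarrow V=\mathcal F_V(\mathbf p)$ ($\mathbf W$ listing $\mathrm{Dom}\setminus(PA^{\mathcal F}_V\cup\{V\})$, $\mathbf w\in\mathrm{Ran}(\mathbf W)$, $\mathbf p\in\mathrm{Ran}(PA^{\mathcal F}_V)$), $\xi(V)$ the conjunction of all $V=v\supset(\mathbf W_V=\mathbf w\;\Box\!\!\rightarrow V=v)$. $\chi:=\bigwedge_{V}\bigwedge_{\mathbf w\in\mathrm{Ran}(\mathbf W_V)}(\mathbf W_V=\mathbf w\;\Box\!\!\rightarrow{=}(V))\wedge\bigwedge_V{=}(V)$; $\chi_0:=\bot$,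 $\chi_k:=\chi\vee\dots\vee\chi$ ($k$ disjuncts). For a nonempty generalized causal team $T$ with $|T/_{\approx}|=k+1$: $\Xi^T:=\chi_k\vee\Theta^{\mathbb A_\sigma\setminus T^-}\vee\bigvee\{\Theta^{\{s\}}\wedge\Phi^{\mathcal F}: s\in T^-,\ \mathcal F\in\mathbb F_\sigma,\ \{(s,\mathcal F)\}\not\preccurlyeq T\}$. For a nonempty causal team $T$, $\Xi^T:=\Xi^{T^g}$. *)

theory Defs
  imports Main "HOL-Library.FuncSet"
begin

text \<open>Elements of Ran(Xs) (for a set Xs of variables) are represented as extensional
  functions in PiE Xs Ran; assignments are the elements of PiE Dom Ran.\<close>

definition signature :: "'v set \<Rightarrow> ('v \<Rightarrow> 'a set) \<Rightarrow> bool" where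
  "signature Dom Ran \<longleftrightarrow> finite Dom \<and> Dom \<noteq> {} \<and>
     (\<forall>X\<in>Dom. finite (Ran X) \<and> Ran X \<noteq> {})"

definition assignments :: "'v set \<Rightarrow> ('v \<Rightarrow> 'a set) \<Rightarrow> ('v \<Rightarrow> 'a) set" where
  "assignments Dom Ran = PiE Dom Ran"

record ('v, 'a) sys =
  en :: "'v set"
  pa :: "'v \<Rightarrow> 'v set"
  fn :: "'v \<Rightarrow> ('v \<Rightarrow> 'a) \<Rightarrow> 'a"

definition wf_sys :: "'v set \<Rightarrow> ('v \<Rightarrow> 'a set) \<Rightarrow> ('v, 'a) sys \<Rightarrow> bool" where
  "wf_sys Dom Ran F \<longleftrightarrow>
     en F \<subseteq> Dom \<and>
     (\<forall>V\<in>en F. pa F V \<subseteq> Dom - {V} \<and> fn F V \<in> PiE (PiE (pa F V) Ran) (\<lambda>_. Ran V)) \<and>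
     (\<forall>V. V \<notin> en F \<longrightarrow> pa F V = {} \<and> fn F V = (\<lambda>_. undefined)) \<and>
     acyclic {(X, V). V \<in> en F \<and> X \<in> pa F V}"

definition compatible :: "'v set \<Rightarrow> ('v \<Rightarrow> 'a set) \<Rightarrow> ('v \<Rightarrow> 'a) \<Rightarrow> ('v, 'a) sys \<Rightarrow> bool" where
  "compatible Dom Ran s F \<longleftrightarrow> s \<in> assignments Dom Ran \<and>
     (\<forall>V\<in>en F. s V = fn F V (restrict s (pa F V)))"

definition causal_team :: "'v set \<Rightarrow> ('v \<Rightarrow> 'a set) \<Rightarrow> ('v \<Rightarrow> 'a) set \<Rightarrow> ('v, 'a) sys \<Rightarrow> bool" where
  "causal_team Dom Ran T F \<longleftrightarrow> wf_sys Dom Ran F \<and> (\<forall>s\<in>T. compatible Dom Ran s F)"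

definition gen_team :: "'v set \<Rightarrow> ('v \<Rightarrow> 'a set) \<Rightarrow> (('v \<Rightarrow> 'a) \<times> ('v, 'a) sys) set \<Rightarrow> bool" where
  "gen_team Dom Ran T \<longleftrightarrow> (\<forall>(s, F)\<in>T. wf_sys Dom Ran F \<and> compatible Dom Ran s F)"

text \<open>An antecedent X1=x1 /\ ... /\ Xn=xn is a list of pairs.\<close>
definition consistent :: "('v \<times> 'a) list \<Rightarrow> bool" where
  "consistent xs \<longleftrightarrow> (\<forall>(X, x)\<in>set xs. \<forall>(Y, y)\<in>set xs. X = Y \<longrightarrow> x = y)"

definition do_sys :: "('v, 'a) sys \<Rightarrow> ('v \<times> 'a) list \<Rightarrow> ('v, 'a) sys" where
  "do_sys F xs =
     (let E = en F - fst ` set xs in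
      \<lparr> en = E,
        pa = (\<lambda>V. if V \<in> E then pa F V else {}),
        fn = (\<lambda>V. if V \<in> E then fn F V else (\<lambda>_. undefined)) \<rparr>)"

text \<open>The intervened assignment s^F_{X=x}, the unique assignment satisfying the
  recursive clauses (unique since F is recursive).\<close>
definition do_asg :: "('v, 'a) sys \<Rightarrow> ('v \<times> 'a) list \<Rightarrow> ('v \<Rightarrow> 'a) \<Rightarrow> ('v \<Rightarrow> 'a)" where
  "do_asg F xs s = (THE t.
     (\<forall>(X, x)\<in>set xs. t X = x) \<and>
     (\<forall>V. V \<notin> en F \<and> V \<notin> fst ` set xs \<longrightarrow> t V = s V) \<and>
     (\<forall>V\<in>en F - fst ` set xs. t V = fn F V (restrict t (pa F V))))"

datatype ('v, 'a) fml =
    Eq 'v 'a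
  | Dep 'v
  | Neg "('v, 'a) fml"
  | And "('v, 'a) fml" "('v, 'a) fml"
  | Or "('v, 'a) fml" "('v, 'a) fml"
  | Cf "('v \<times> 'a) list" "('v, 'a) fml"

fun sat_c :: "('v \<Rightarrow> 'a) set \<Rightarrow> ('v, 'a) sys \<Rightarrow> ('v, 'a) fml \<Rightarrow> bool" where
  "sat_c T F (Eq X x) \<longleftrightarrow> (\<forall>s\<in>T. s X = x)"
| "sat_c T F (Dep V) \<longleftrightarrow> (\<forall>s\<in>T. \<forall>s'\<in>T. s V = s' V)"
| "sat_c T F (Neg \<alpha>) \<longleftrightarrow> (\<forall>s\<in>T. \<not> sat_c {s} F \<alpha>)"
| "sat_c T F (And \<phi> \<psi>) \<longleftrightarrow> sat_c T F \<phi> \<and> sat_c T F \<psi>"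
| "sat_c T F (Or \<phi> \<psi>) \<longleftrightarrow>
     (\<exists>T1 T2. T1 \<subseteq> T \<and> T2 \<subseteq> T \<and> T1 \<union> T2 = T \<and> sat_c T1 F \<phi> \<and> sat_c T2 F \<psi>)"
| "sat_c T F (Cf xs \<phi>) \<longleftrightarrow>
     (\<not> consistent xs \<or> sat_c (do_asg F xs ` T) (do_sys F xs) \<phi>)"

fun sat_g :: "(('v \<Rightarrow> 'a) \<times> ('v, 'a) sys) set \<Rightarrow> ('v, 'a) fml \<Rightarrow> bool" where
  "sat_g T (Eq X x) \<longleftrightarrow> (\<forall>(s, F)\<in>T. s X = x)"
| "sat_g T (Dep V) \<longleftrightarrow> (\<forall>(s, F)\<in>T. \<forall>(s', F')\<in>T. s V = s' V)"
| "sat_g T (Neg \<alpha>) \<longleftrightarrow> (\<forall>p\<in>T. \<not> sat_g {p} \<alpha>)"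
| "sat_g T (And \<phi> \<psi>) \<longleftrightarrow> sat_g T \<phi> \<and> sat_g T \<psi>"
| "sat_g T (Or \<phi> \<psi>) \<longleftrightarrow> (\<exists>T1 T2. T = T1 \<union> T2 \<and> sat_g T1 \<phi> \<and> sat_g T2 \<psi>)"
| "sat_g T (Cf xs \<phi>) \<longleftrightarrow>
     (\<not> consistent xs \<or> sat_g ((\<lambda>(s, F). (do_asg F xs s, do_sys F xs)) ` T) \<phi>)"

definition Cn :: "('v \<Rightarrow> 'a set) \<Rightarrow> ('v, 'a) sys \<Rightarrow> 'v set" where
  "Cn Ran F = {V\<in>en F. \<forall>p\<in>PiE (pa F V) Ran. \<forall>q\<in>PiE (pa F V) Ran. fn F V p = fn F V q}"

definition sim_fn :: "('v \<Rightarrow> 'a set) \<Rightarrow> ('v, 'a) sys \<Rightarrow> ('v, 'a) sys \<Rightarrow> 'v \<Rightarrow> bool" where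
  "sim_fn Ran F G V \<longleftrightarrow>
     (\<forall>p\<in>PiE (pa F V) Ran. \<forall>q\<in>PiE (pa G V) Ran.
        (\<forall>X\<in>pa F V \<inter> pa G V. p X = q X) \<longrightarrow> fn F V p = fn G V q)"

definition sim :: "('v \<Rightarrow> 'a set) \<Rightarrow> ('v, 'a) sys \<Rightarrow> ('v, 'a) sys \<Rightarrow> bool" where
  "sim Ran F G \<longleftrightarrow> en F - Cn Ran F = en G - Cn Ran G \<and>
     (\<forall>V\<in>en F - Cn Ran F. sim_fn Ran F G V)"

definition approx_c :: "('v \<Rightarrow> 'a set) \<Rightarrow> ('v \<Rightarrow> 'a) set \<Rightarrow> ('v, 'a) sys \<Rightarrow> ('v \<Rightarrow> 'a) set \<Rightarrow> ('v, 'a) sys \<Rightarrow> bool" where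
  "approx_c Ran T F S G \<longleftrightarrow> T = S \<and> (T = {} \<or> sim Ran F G)"

definition prec_c :: "('v \<Rightarrow> 'a set) \<Rightarrow> ('v \<Rightarrow> 'a) set \<Rightarrow> ('v, 'a) sys \<Rightarrow> ('v \<Rightarrow> 'a) set \<Rightarrow> ('v, 'a) sys \<Rightarrow> bool" where
  "prec_c Ran S F T G \<longleftrightarrow> (\<exists>R\<subseteq>T. approx_c Ran S F R G)"

definition gen_restr :: "('v \<Rightarrow> 'a set) \<Rightarrow> (('v \<Rightarrow> 'a) \<times> ('v, 'a) sys) set \<Rightarrow> ('v, 'a) sys
     \<Rightarrow> (('v \<Rightarrow> 'a) \<times> ('v, 'a) sys) set" where
  "gen_restr Ran T F = {(s, G)\<in>T. sim Ran G F}"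

definition approx_g :: "'v set \<Rightarrow> ('v \<Rightarrow> 'a set) \<Rightarrow> (('v \<Rightarrow> 'a) \<times> ('v, 'a) sys) set
     \<Rightarrow> (('v \<Rightarrow> 'a) \<times> ('v, 'a) sys) set \<Rightarrow> bool" where
  "approx_g Dom Ran S T \<longleftrightarrow>
     (\<forall>F. wf_sys Dom Ran F \<longrightarrow> fst ` gen_restr Ran S F = fst ` gen_restr Ran T F)"

definition prec_g :: "'v set \<Rightarrow> ('v \<Rightarrow> 'a set) \<Rightarrow> (('v \<Rightarrow> 'a) \<times> ('v, 'a) sys) set
     \<Rightarrow> (('v \<Rightarrow> 'a) \<times> ('v, 'a) sys) set \<Rightarrow> bool" where
  "prec_g Dom Ran S T \<longleftrightarrow> (\<exists>R\<subseteq>T. approx_g Dom Ran S R)"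

definition num_classes :: "('v \<Rightarrow> 'a set) \<Rightarrow> (('v \<Rightarrow> 'a) \<times> ('v, 'a) sys) set \<Rightarrow> nat" where
  "num_classes Ran T =
     card ((\<lambda>(s, F). {(t, G)\<in>T. t = s \<and> sim Ran F G}) ` T)"

text \<open>Big connectives over finite sets of formulas, via an arbitrary enumeration
  (the semantics of \<and> and \<or> is associative and commutative).\<close>
definition lst :: "'b set \<Rightarrow> 'b list" where
  "lst A = (SOME xs. set xs = A \<and> distinct xs)"

fun ors :: "('v, 'a) fml \<Rightarrow> ('v, 'a) fml list \<Rightarrow> ('v, 'a) fml" where
  "ors b [] = b"
| "ors b [\<phi>] = \<phi>"
| "ors b (\<phi> # \<psi> # \<psi>s) = Or \<phi> (ors b (\<psi> # \<psi>s))"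

fun ands :: "('v, 'a) fml \<Rightarrow> ('v, 'a) fml list \<Rightarrow> ('v, 'a) fml" where
  "ands b [] = b"
| "ands b [\<phi>] = \<phi>"
| "ands b (\<phi> # \<psi> # \<psi>s) = And \<phi> (ands b (\<psi> # \<psi>s))"

definition Bot :: "'v set \<Rightarrow> ('v \<Rightarrow> 'a set) \<Rightarrow> ('v, 'a) fml" where
  "Bot Dom Ran = (let X = (SOME X. X \<in> Dom); x = (SOME x. x \<in> Ran X) in And (Eq X x) (Neg (Eq X x)))"

definition BigOr :: "'v set \<Rightarrow> ('v \<Rightarrow> 'a set) \<Rightarrow> ('v, 'a) fml set \<Rightarrow> ('v, 'a) fml" where
  "BigOr Dom Ran A = ors (Bot Dom Ran) (lst A)"

definition BigAnd :: "'v set \<Rightarrow> ('v \<Rightarrow> 'a set) \<Rightarrow> ('v, 'a) fml set \<Rightarrow> ('v, 'a) fml" where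
  "BigAnd Dom Ran A = ands (Neg (Bot Dom Ran)) (lst A)"

definition ante :: "'v set \<Rightarrow> ('v \<Rightarrow> 'a) \<Rightarrow> ('v \<times> 'a) list" where
  "ante W w = map (\<lambda>X. (X, w X)) (lst W)"

definition Theta :: "'v set \<Rightarrow> ('v \<Rightarrow> 'a set) \<Rightarrow> ('v \<Rightarrow> 'a) set \<Rightarrow> ('v, 'a) fml" where
  "Theta Dom Ran A = BigOr Dom Ran ((\<lambda>s. BigAnd Dom Ran ((\<lambda>V. Eq V (s V)) ` Dom)) ` A)"

text \<open>eta(V): conjunction of all (W = w /\ PA_V = p) []-> V = F_V(p); the pair (w,p)
  is represented by a single element q of Ran(Dom - {V}).\<close>
definition eta :: "'v set \<Rightarrow> ('v \<Rightarrow> 'a set) \<Rightarrow> ('v, 'a) sys \<Rightarrow> 'v \<Rightarrow> ('v, 'a) fml" where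
  "eta Dom Ran F V = BigAnd Dom Ran
     ((\<lambda>q. Cf (ante (Dom - {V}) q) (Eq V (fn F V (restrict q (pa F V))))) ` PiE (Dom - {V}) Ran)"

definition xi :: "'v set \<Rightarrow> ('v \<Rightarrow> 'a set) \<Rightarrow> 'v \<Rightarrow> ('v, 'a) fml" where
  "xi Dom Ran V = BigAnd Dom Ran
     {Or (Neg (Eq V v)) (Cf (ante (Dom - {V}) w) (Eq V v)) | v w. v \<in> Ran V \<and> w \<in> PiE (Dom - {V}) Ran}"

definition Phi :: "'v set \<Rightarrow> ('v \<Rightarrow> 'a set) \<Rightarrow> ('v, 'a) sys \<Rightarrow> ('v, 'a) fml" where
  "Phi Dom Ran F = BigAnd Dom Ran
     (eta Dom Ran F ` (en F - Cn Ran F) \<union> xi Dom Ran ` (Dom - (en F - Cn Ran F)))"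

definition chi :: "'v set \<Rightarrow> ('v \<Rightarrow> 'a set) \<Rightarrow> ('v, 'a) fml" where
  "chi Dom Ran = And
     (BigAnd Dom Ran {Cf (ante (Dom - {V}) w) (Dep V) | V w. V \<in> Dom \<and> w \<in> PiE (Dom - {V}) Ran})
     (BigAnd Dom Ran (Dep ` Dom))"

definition chik :: "'v set \<Rightarrow> ('v \<Rightarrow> 'a set) \<Rightarrow> nat \<Rightarrow> ('v, 'a) fml" where
  "chik Dom Ran k = ors (Bot Dom Ran) (replicate k (chi Dom Ran))"

definition Xi_g :: "'v set \<Rightarrow> ('v \<Rightarrow> 'a set) \<Rightarrow> (('v \<Rightarrow> 'a) \<times> ('v, 'a) sys) set \<Rightarrow> ('v, 'a) fml" where
  "Xi_g Dom Ran T =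
     Or (chik Dom Ran (num_classes Ran T - 1))
       (Or (Theta Dom Ran (assignments Dom Ran - fst ` T))
           (BigOr Dom Ran {And (Theta Dom Ran {s}) (Phi Dom Ran F) | s F.
               s \<in> fst ` T \<and> wf_sys Dom Ran F \<and> \<not> prec_g Dom Ran {(s, F)} T}))"

definition to_gen :: "('v \<Rightarrow> 'a) set \<Rightarrow> ('v, 'a) sys \<Rightarrow> (('v \<Rightarrow> 'a) \<times> ('v, 'a) sys) set" where
  "to_gen T F = {(s, F) | s. s \<in> T}"

definition Xi_c :: "'v set \<Rightarrow> ('v \<Rightarrow> 'a set) \<Rightarrow> ('v \<Rightarrow> 'a) set \<Rightarrow> ('v, 'a) sys \<Rightarrow> ('v, 'a) fml" where
  "Xi_c Dom Ran T F = Xi_g Dom Ran (to_gen T F)"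

end

(*
  Theta^A and Phi^F are flat formulas, and a single pair (s, G) satisfies them iff s is in A,
  resp. G ~ F.  The latter holds because G ~ F iff, with constant mechanisms read as exogenous,
  G and F give every variable V the same value under every intervention on all the other
  variables; these are exactly the counterfactuals Phi^F lists.  Hence a pair satisfies the last
  two disjuncts of Xi^T iff its ~~-class does not occur in T, while chi_k holds in a team iff
  the team meets at most k classes.  So S satisfies Xi^T iff the members of S whose class occurs
  in T meet fewer than |T/~~| classes, i.e. iff some class of T is missing from S, which is the
  failure of T <= S.  Causal teams reduce to generalized ones via (T, F) |-> T^g.
*)
theory Submission
  imports Defs
begin

lemma set_lst: "finite A \<Longrightarrow> set (lst A) = A"
  unfolding lst_def by (metis (mono_tags, lifting) finite_distinct_list someI_ex)

lemma sat_g_empty: "sat_g {} \<phi>"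
  by (induction \<phi>) auto

lemma sat_g_Bot: "sat_g S (Bot Dom Ran) \<longleftrightarrow> S = {}"
  by (auto simp: Bot_def Let_def)

lemma sat_g_ands: "sat_g S (ands b \<phi>s) \<longleftrightarrow> (if \<phi>s = [] then sat_g S b else \<forall>\<phi>\<in>set \<phi>s. sat_g S \<phi>)"
  by (induction b \<phi>s rule: ands.induct) auto

lemma sat_g_BigAnd: "finite A \<Longrightarrow> sat_g S (BigAnd Dom Ran A) \<longleftrightarrow> (\<forall>\<phi>\<in>A. sat_g S \<phi>)"
  using set_lst[of A] by (cases "lst A = []") (auto simp: BigAnd_def sat_g_ands sat_g_Bot)

lemma sat_g_Or_singleton: "sat_g {p} (Or \<phi> \<psi>) \<longleftrightarrow> sat_g {p} \<phi> \<or> sat_g {p} \<psi>"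
proof
  assume "sat_g {p} (Or \<phi> \<psi>)"
  then obtain T1 T2 where "{p} = T1 \<union> T2" "sat_g T1 \<phi>" "sat_g T2 \<psi>"
    by auto
  then show "sat_g {p} \<phi> \<or> sat_g {p} \<psi>"
    by (metis Un_empty_left insert_not_empty subset_singleton_iff sup.cobounded1)
next
  assume "sat_g {p} \<phi> \<or> sat_g {p} \<psi>"
  then show "sat_g {p} (Or \<phi> \<psi>)"
    using sat_g_empty[of \<phi>] sat_g_empty[of \<psi>] unfolding sat_g.simps(5) by blast
qed

lemma sat_g_ors_singleton:
  "sat_g {p} (ors b \<phi>s) \<longleftrightarrow> (if \<phi>s = [] then sat_g {p} b else \<exists>\<phi>\<in>set \<phi>s. sat_g {p} \<phi>)"
  by (induction b \<phi>s rule: ors.induct) (auto simp del: sat_g.simps(5) simp: sat_g_Or_singleton)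

lemma sat_g_BigOr_singleton: "finite A \<Longrightarrow> sat_g {p} (BigOr Dom Ran A) \<longleftrightarrow> (\<exists>\<phi>\<in>A. sat_g {p} \<phi>)"
  using set_lst[of A] by (cases "lst A = []") (auto simp: BigOr_def sat_g_ors_singleton sat_g_Bot)

definition flat :: "('v, 'a) fml \<Rightarrow> bool" where
  "flat \<phi> \<longleftrightarrow> (\<forall>S. sat_g S \<phi> \<longleftrightarrow> (\<forall>p\<in>S. sat_g {p} \<phi>))"

lemma flatD: "flat \<phi> \<Longrightarrow> sat_g S \<phi> \<longleftrightarrow> (\<forall>p\<in>S. sat_g {p} \<phi>)"
  unfolding flat_def by blast

lemma flat_Eq: "flat (Eq X x)"
  by (auto simp: flat_def)

lemma flat_Neg: "flat (Neg \<alpha>)"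
  by (auto simp: flat_def)

lemma flat_And: "flat \<phi> \<Longrightarrow> flat \<psi> \<Longrightarrow> flat (And \<phi> \<psi>)"
  unfolding flat_def by (metis sat_g.simps(4))

lemma flat_Or:
  assumes "flat \<phi>" and "flat \<psi>"
  shows "flat (Or \<phi> \<psi>)"
  unfolding flat_def
proof (intro allI iffI)
  fix S assume "sat_g S (Or \<phi> \<psi>)"
  then obtain T1 T2 where "S = T1 \<union> T2" "sat_g T1 \<phi>" "sat_g T2 \<psi>"
    by auto
  then show "\<forall>p\<in>S. sat_g {p} (Or \<phi> \<psi>)"
    using flatD[OF assms(1), of T1] flatD[OF assms(2), of T2] sat_g_Or_singleton by blast
next
  fix S assume "\<forall>p\<in>S. sat_g {p} (Or \<phi> \<psi>)"
  then have "sat_g {p} \<psi>" if "p \<in> S" "\<not> sat_g {p} \<phi>" for p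
    using that sat_g_Or_singleton by blast
  then have "sat_g {p\<in>S. sat_g {p} \<phi>} \<phi>" "sat_g {p\<in>S. \<not> sat_g {p} \<phi>} \<psi>"
    using flatD[OF assms(1), of "{p\<in>S. sat_g {p} \<phi>}"] flatD[OF assms(2), of "{p\<in>S. \<not> sat_g {p} \<phi>}"] by blast+
  moreover have "S = {p\<in>S. sat_g {p} \<phi>} \<union> {p\<in>S. \<not> sat_g {p} \<phi>}"
    by blast
  ultimately show "sat_g S (Or \<phi> \<psi>)"
    unfolding sat_g.simps(5) by blast
qed

lemma flat_Cf:
  assumes "flat \<phi>"
  shows "flat (Cf xs \<phi>)"
proof -
  let ?do = "\<lambda>(s, F). (do_asg F xs s, do_sys F xs)"
  have "sat_g (?do ` S) \<phi> \<longleftrightarrow> (\<forall>p\<in>S. sat_g {?do p} \<phi>)" for S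
    using flatD[OF assms, of "?do ` S"] by blast
  then show ?thesis
    unfolding flat_def by simp
qed

lemma flat_Bot: "flat (Bot Dom Ran)"
  by (simp add: Bot_def Let_def flat_And flat_Eq flat_Neg)

lemma flat_ands: "flat b \<Longrightarrow> \<forall>\<phi>\<in>set \<phi>s. flat \<phi> \<Longrightarrow> flat (ands b \<phi>s)"
  by (induction b \<phi>s rule: ands.induct) (simp_all add: flat_And)

lemma flat_ors: "flat b \<Longrightarrow> \<forall>\<phi>\<in>set \<phi>s. flat \<phi> \<Longrightarrow> flat (ors b \<phi>s)"
  by (induction b \<phi>s rule: ors.induct) (simp_all add: flat_Or)

lemma flat_BigAnd: "finite A \<Longrightarrow> \<forall>\<phi>\<in>A. flat \<phi> \<Longrightarrow> flat (BigAnd Dom Ran A)"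
  unfolding BigAnd_def by (rule flat_ands) (simp_all add: flat_Neg set_lst)

lemma flat_BigOr: "finite A \<Longrightarrow> \<forall>\<phi>\<in>A. flat \<phi> \<Longrightarrow> flat (BigOr Dom Ran A)"
  unfolding BigOr_def by (rule flat_ors) (simp_all add: flat_Bot set_lst)

lemma to_gen_eq_image: "to_gen T F = (\<lambda>s. (s, F)) ` T"
  by (auto simp: to_gen_def)

lemma sat_c_iff_sat_g_to_gen: "sat_c T F \<phi> \<longleftrightarrow> sat_g (to_gen T F) \<phi>"
proof (induction \<phi> arbitrary: T F)
  case (Neg \<alpha>)
  then show ?case
    by (simp add: to_gen_eq_image)
next
  case (Or \<phi> \<psi>)
  show ?case
  proof
    assume "sat_c T F (Or \<phi> \<psi>)"
    then obtain T1 T2 where "T1 \<union> T2 = T" "sat_c T1 F \<phi>" "sat_c T2 F \<psi>"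
      by auto
    moreover have "to_gen (T1 \<union> T2) F = to_gen T1 F \<union> to_gen T2 F"
      by (auto simp: to_gen_def)
    ultimately show "sat_g (to_gen T F) (Or \<phi> \<psi>)"
      using Or.IH by auto
  next
    assume "sat_g (to_gen T F) (Or \<phi> \<psi>)"
    then obtain U1 U2 where U: "to_gen T F = U1 \<union> U2" "sat_g U1 \<phi>" "sat_g U2 \<psi>"
      by auto
    then have "U1 = to_gen (fst ` U1) F" "U2 = to_gen (fst ` U2) F"
      unfolding to_gen_eq_image by force+
    moreover have "fst ` U1 \<union> fst ` U2 = T"
      using U(1) unfolding to_gen_eq_image by force
    ultimately show "sat_c T F (Or \<phi> \<psi>)"
      using U(2,3) Or.IH by (simp only: sat_c.simps) (metis Un_upper1 Un_upper2)
  qed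
next
  case (Cf xs \<phi>)
  have "(\<lambda>(s, F). (do_asg F xs s, do_sys F xs)) ` to_gen T F = to_gen (do_asg F xs ` T) (do_sys F xs)"
    unfolding to_gen_eq_image by auto
  then show ?case
    using Cf.IH by simp
qed (auto simp: to_gen_eq_image)

lemma gen_teamD:
  "gen_team Dom Ran S \<Longrightarrow> p \<in> S \<Longrightarrow> wf_sys Dom Ran (snd p) \<and> compatible Dom Ran (fst p) (snd p)"
  unfolding gen_team_def by auto

lemma gen_team_subset: "gen_team Dom Ran S \<Longrightarrow> U \<subseteq> S \<Longrightarrow> gen_team Dom Ran U"
  unfolding gen_team_def by auto

lemma gen_team_singleton_iff:
  "gen_team Dom Ran {p} \<longleftrightarrow> wf_sys Dom Ran (snd p) \<and> compatible Dom Ran (fst p) (snd p)"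
  by (auto simp: gen_team_def)

lemma gen_team_to_gen: "causal_team Dom Ran T F \<Longrightarrow> gen_team Dom Ran (to_gen T F)"
  unfolding causal_team_def gen_team_def to_gen_def by auto

lemma card_image_le_Suc_iff:
  assumes "finite S"
  shows "card (f ` S) \<le> Suc k \<longleftrightarrow> (\<exists>S1 S2. S = S1 \<union> S2 \<and> card (f ` S1) \<le> 1 \<and> card (f ` S2) \<le> k)"
proof
  assume le: "card (f ` S) \<le> Suc k"
  show "\<exists>S1 S2. S = S1 \<union> S2 \<and> card (f ` S1) \<le> 1 \<and> card (f ` S2) \<le> k"
  proof (cases "S = {}")
    case False
    then obtain p where "p \<in> S"
      by blast
    let ?S1 = "{q\<in>S. f q = f p}" and ?S2 = "{q\<in>S. f q \<noteq> f p}"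
    have "f ` ?S1 \<subseteq> {f p}" "f ` ?S2 = f ` S - {f p}"
      by auto
    then have "card (f ` ?S1) \<le> 1" "card (f ` ?S2) \<le> k"
      using le \<open>p \<in> S\<close> assms by (auto simp: card_le_Suc0_iff_eq)
    moreover have "S = ?S1 \<union> ?S2"
      by blast
    ultimately show ?thesis
      by blast
  qed simp
next
  assume "\<exists>S1 S2. S = S1 \<union> S2 \<and> card (f ` S1) \<le> 1 \<and> card (f ` S2) \<le> k"
  then obtain S1 S2 where "S = S1 \<union> S2" "card (f ` S1) \<le> 1" "card (f ` S2) \<le> k"
    by blast
  then show "card (f ` S) \<le> Suc k"
    using card_Un_le[of "f ` S1" "f ` S2"] by (simp add: image_Un)
qed

lemma ex_split_card_image_less_iff:
  assumes "finite S"
  shows "(\<exists>S1 S2. S = S1 \<union> S2 \<and> card (f ` S1) < n \<and> (\<forall>p\<in>S2. f p \<notin> K)) \<longleftrightarrow> card (f ` S \<inter> K) < n"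
proof
  assume "\<exists>S1 S2. S = S1 \<union> S2 \<and> card (f ` S1) < n \<and> (\<forall>p\<in>S2. f p \<notin> K)"
  then obtain S1 S2 where S: "S = S1 \<union> S2" "card (f ` S1) < n" "\<forall>p\<in>S2. f p \<notin> K"
    by blast
  then have "f ` S \<inter> K \<subseteq> f ` S1"
    by blast
  moreover have "finite (f ` S1)"
    using assms S(1) by simp
  ultimately show "card (f ` S \<inter> K) < n"
    using S(2) card_mono by (blast intro: le_less_trans)
next
  assume "card (f ` S \<inter> K) < n"
  moreover have "f ` {p\<in>S. f p \<in> K} = f ` S \<inter> K"
    by auto
  moreover have "S = {p\<in>S. f p \<in> K} \<union> {p\<in>S. f p \<notin> K}"
    by blast
  ultimately show "\<exists>S1 S2. S = S1 \<union> S2 \<and> card (f ` S1) < n \<and> (\<forall>p\<in>S2. f p \<notin> K)"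
    by (metis (mono_tags, lifting) mem_Collect_eq)
qed

lemma card_Int_less_iff_not_subset:
  assumes "finite K"
  shows "card (A \<inter> K) < card K \<longleftrightarrow> \<not> K \<subseteq> A"
proof
  assume "card (A \<inter> K) < card K"
  then show "\<not> K \<subseteq> A"
    by (metis Int_absorb1 inf_commute less_irrefl)
next
  assume "\<not> K \<subseteq> A"
  then have "A \<inter> K \<subset> K"
    by blast
  then show "card (A \<inter> K) < card K"
    using assms by (rule psubset_card_mono[rotated])
qed

lemma PiE_common_extension:
  assumes "P \<subseteq> D" "Q \<subseteq> D" "\<forall>X\<in>D. Ran X \<noteq> {}"
    and p: "p \<in> PiE P Ran" and q: "q \<in> PiE Q Ran" and "\<forall>X\<in>P \<inter> Q. p X = q X"
  shows "\<exists>w\<in>PiE D Ran. restrict w P = p \<and> restrict w Q = q"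
proof -
  define w where "w X = (if X \<in> P then p X else if X \<in> Q then q X
      else if X \<in> D then (SOME x. x \<in> Ran X) else undefined)" for X
  have "w \<in> PiE D Ran"
  proof (rule PiE_I)
    fix X assume "X \<in> D"
    then show "w X \<in> Ran X"
      using assms(3) PiE_mem[OF p] PiE_mem[OF q] by (simp add: w_def some_in_eq)
  next
    fix X assume "X \<notin> D"
    then show "w X = undefined"
      using assms(1,2) by (auto simp: w_def)
  qed
  moreover have "restrict w P = p" "restrict w Q = q"
    using assms(6) PiE_arb[OF p] PiE_arb[OF q] by (auto simp: w_def restrict_def)
  ultimately show ?thesis
    by blast
qed

lemma assignments_eq_iff:
  "s \<in> assignments Dom Ran \<Longrightarrow> t \<in> assignments Dom Ran \<Longrightarrow> s = t \<longleftrightarrow> (\<forall>V\<in>Dom. s V = t V)"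
  unfolding assignments_def using PiE_ext by blast

lemma consistent_ante: "consistent (ante W w)"
  unfolding consistent_def ante_def by auto

definition response :: "('v \<Rightarrow> 'a) \<times> ('v, 'a) sys \<Rightarrow> 'v \<Rightarrow> ('v \<Rightarrow> 'a) \<Rightarrow> 'a" where
  "response p V w = (if V \<in> en (snd p) then fn (snd p) V (restrict w (pa (snd p) V)) else fst p V)"

text \<open>Constant mechanisms are read as exogenous; this is the behaviour that \<open>sim\<close> compares.\<close>
definition reduced_response :: "('v \<Rightarrow> 'a set) \<Rightarrow> ('v \<Rightarrow> 'a) \<times> ('v, 'a) sys \<Rightarrow> 'v \<Rightarrow> ('v \<Rightarrow> 'a) \<Rightarrow> 'a" where
  "reduced_response Ran p V w =
     (if V \<in> en (snd p) - Cn Ran (snd p) then fn (snd p) V (restrict w (pa (snd p) V)) else fst p V)"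

locale sigma =
  fixes Dom :: "'v set" and Ran :: "'v \<Rightarrow> 'a set"
  assumes signature: "signature Dom Ran"
begin

lemma finite_Dom: "finite Dom"
  and finite_Ran: "X \<in> Dom \<Longrightarrow> finite (Ran X)"
  and Ran_nonempty: "X \<in> Dom \<Longrightarrow> Ran X \<noteq> {}"
  using signature by (auto simp: signature_def)

lemma finite_PiE_Ran: "W \<subseteq> Dom \<Longrightarrow> finite (PiE W Ran)"
  using finite_Dom finite_Ran by (intro finite_PiE) (auto intro: finite_subset)

lemma finite_assignments: "finite (assignments Dom Ran)"
  unfolding assignments_def by (rule finite_PiE_Ran) simp

lemma finite_wf_sys: "finite {F. wf_sys Dom Ran F}"
proof -
  define Fns where "Fns = insert (\<lambda>_. undefined) (\<Union>P\<in>Pow Dom. \<Union>V\<in>Dom. PiE (PiE P Ran) (\<lambda>_. Ran V))"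
  define PAs where "PAs = {p. \<forall>V. (V \<in> Dom \<longrightarrow> p V \<in> Pow Dom) \<and> (V \<notin> Dom \<longrightarrow> p V = {})}"
  define FNs where "FNs = {f. \<forall>V. (V \<in> Dom \<longrightarrow> f V \<in> Fns) \<and> (V \<notin> Dom \<longrightarrow> f V = (\<lambda>_. undefined))}"
  have "finite Fns"
    unfolding Fns_def using finite_Dom finite_Ran
    by (auto intro!: finite_PiE finite_PiE_Ran)
  then have "finite (Pow Dom \<times> PAs \<times> FNs)"
    unfolding PAs_def FNs_def using finite_Dom by (intro finite_SigmaI finite_set_of_finite_funs) auto
  moreover have "{F. wf_sys Dom Ran F} \<subseteq> (\<lambda>(e, p, f). \<lparr>en = e, pa = p, fn = f\<rparr>) ` (Pow Dom \<times> PAs \<times> FNs)"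
  proof
    fix F assume "F \<in> {F. wf_sys Dom Ran F}"
    then have F: "wf_sys Dom Ran F"
      by simp
    have "en F \<in> Pow Dom"
      using F by (simp add: wf_sys_def)
    moreover have "pa F \<in> PAs"
      using F unfolding PAs_def wf_sys_def by auto
    moreover have "fn F V \<in> Fns" if "V \<in> Dom" for V
    proof (cases "V \<in> en F")
      case True
      then have "pa F V \<in> Pow Dom" "fn F V \<in> PiE (PiE (pa F V) Ran) (\<lambda>_. Ran V)"
        using F by (auto simp: wf_sys_def)
      then show ?thesis
        using that unfolding Fns_def by blast
    qed (use F in \<open>simp add: Fns_def wf_sys_def\<close>)
    then have "fn F \<in> FNs"
      using F unfolding FNs_def wf_sys_def by auto
    ultimately have "(en F, pa F, fn F) \<in> Pow Dom \<times> PAs \<times> FNs"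
      by simp
    then show "F \<in> (\<lambda>(e, p, f). \<lparr>en = e, pa = p, fn = f\<rparr>) ` (Pow Dom \<times> PAs \<times> FNs)"
      by (rule rev_image_eqI) simp
  qed
  ultimately show ?thesis
    by (rule finite_surj)
qed

lemma gen_team_finite: "gen_team Dom Ran S \<Longrightarrow> finite S"
proof -
  assume "gen_team Dom Ran S"
  then have "S \<subseteq> assignments Dom Ran \<times> {F. wf_sys Dom Ran F}"
    unfolding gen_team_def compatible_def by auto
  then show "finite S"
    using finite_assignments finite_wf_sys by (rule finite_subset[OF _ finite_SigmaI])
qed

lemma set_ante_all_but: "set (ante (Dom - {V}) w) = (\<lambda>X. (X, w X)) ` (Dom - {V})"
  using set_lst[of "Dom - {V}"] finite_Dom by (simp add: ante_def)

lemma do_asg_ante_all_but: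
  assumes F: "wf_sys Dom Ran F" and "V \<in> Dom"
  shows "do_asg F (ante (Dom - {V}) w) s =
    (\<lambda>X. if X \<in> Dom - {V} then w X else if X = V then response (s, F) V w else s X)"
    (is "_ = ?t")
proof -
  have en: "en F \<subseteq> Dom" and pa: "V \<in> en F \<Longrightarrow> pa F V \<subseteq> Dom - {V}"
    using F by (auto simp: wf_sys_def)
  have restrict_pa: "restrict t (pa F V) = restrict w (pa F V)"
    if "V \<in> en F" "\<forall>X\<in>Dom - {V}. t X = w X" for t
    using pa[OF that(1)] that(2) unfolding restrict_def by (intro ext) auto
  have fst_ante: "fst ` set (ante (Dom - {V}) w) = Dom - {V}"
    unfolding set_ante_all_but by force
  have t_agrees: "\<forall>X\<in>Dom - {V}. ?t X = w X"
    by simp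
  show ?thesis
    unfolding do_asg_def fst_ante
  proof (rule the_equality, intro conjI)
    show "\<forall>(X, x)\<in>set (ante (Dom - {V}) w). ?t X = x"
      by (auto simp: set_ante_all_but)
    show "\<forall>U. U \<notin> en F \<and> U \<notin> Dom - {V} \<longrightarrow> ?t U = s U"
      by (auto simp: response_def)
    show "\<forall>U\<in>en F - (Dom - {V}). ?t U = fn F U (restrict ?t (pa F U))"
      using en restrict_pa[OF _ t_agrees] by (auto simp: response_def)
  next
    fix t assume t: "(\<forall>(X, x)\<in>set (ante (Dom - {V}) w). t X = x) \<and>
        (\<forall>U. U \<notin> en F \<and> U \<notin> Dom - {V} \<longrightarrow> t U = s U) \<and>
        (\<forall>U\<in>en F - (Dom - {V}). t U = fn F U (restrict t (pa F U)))"
    then have t_w: "\<forall>X\<in>Dom - {V}. t X = w X"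
      by (auto simp: set_ante_all_but)
    show "t = ?t"
    proof
      fix X
      show "t X = ?t X"
        using t t_w en restrict_pa[OF _ t_w] \<open>V \<in> Dom\<close>
        by (cases "X = V"; cases "V \<in> en F") (auto simp: response_def)
    qed
  qed
qed

lemma fst_intervention_all_but:
  assumes "gen_team Dom Ran S" "p \<in> S" "V \<in> Dom"
  shows "fst ((\<lambda>(s, F). (do_asg F (ante (Dom - {V}) w) s, do_sys F (ante (Dom - {V}) w))) p) V = response p V w"
  using gen_teamD[OF assms(1,2)] assms(3) by (simp add: case_prod_beta do_asg_ante_all_but)

lemma sat_g_Cf_all_but_Eq:
  assumes "gen_team Dom Ran S" and "V \<in> Dom"
  shows "sat_g S (Cf (ante (Dom - {V}) w) (Eq V x)) \<longleftrightarrow> (\<forall>p\<in>S. response p V w = x)"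
  using fst_intervention_all_but[OF assms(1) _ assms(2)] by (simp add: consistent_ante case_prod_beta)

lemma sat_g_Cf_all_but_Dep:
  assumes "gen_team Dom Ran S" and "V \<in> Dom"
  shows "sat_g S (Cf (ante (Dom - {V}) w) (Dep V)) \<longleftrightarrow> (\<forall>p\<in>S. \<forall>q\<in>S. response p V w = response q V w)"
  using fst_intervention_all_but[OF assms(1) _ assms(2)] by (simp add: consistent_ante case_prod_beta)

lemma response_eq_reduced_response:
  assumes "wf_sys Dom Ran (snd p)" "compatible Dom Ran (fst p) (snd p)"
    and "V \<in> Dom" "w \<in> PiE (Dom - {V}) Ran"
  shows "response p V w = reduced_response Ran p V w"
proof (cases "V \<in> Cn Ran (snd p)")
  case True
  then have V: "V \<in> en (snd p)" and pa: "pa (snd p) V \<subseteq> Dom - {V}"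
    using assms(1) by (auto simp: Cn_def wf_sys_def)
  have "restrict (fst p) (pa (snd p) V) \<in> PiE (pa (snd p) V) Ran"
    "restrict w (pa (snd p) V) \<in> PiE (pa (snd p) V) Ran"
    using assms(2,4) pa by (auto simp: compatible_def assignments_def PiE_iff)
  then have "fn (snd p) V (restrict w (pa (snd p) V)) = fn (snd p) V (restrict (fst p) (pa (snd p) V))"
    using True by (simp add: Cn_def)
  also have "\<dots> = fst p V"
    using assms(2) V by (simp add: compatible_def)
  finally show ?thesis
    using True V by (simp add: response_def reduced_response_def)
qed (simp add: response_def reduced_response_def)

lemma nonconstant_if_reduced_response_eq:
  assumes F: "wf_sys Dom Ran F"
    and eq: "\<forall>V\<in>Dom. \<forall>w\<in>PiE (Dom - {V}) Ran. reduced_response Ran (s, F) V w = reduced_response Ran (s, G) V w"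
    and V: "V \<in> en F - Cn Ran F"
  shows "V \<in> en G - Cn Ran G"
proof (rule ccontr)
  assume "V \<notin> en G - Cn Ran G"
  have pa: "pa F V \<subseteq> Dom - {V}" and "V \<in> Dom"
    using F V by (auto simp: wf_sys_def)
  have "fn F V q = s V" if q: "q \<in> PiE (pa F V) Ran" for q
  proof -
    obtain w where w: "w \<in> PiE (Dom - {V}) Ran" "restrict w (pa F V) = q"
      using PiE_common_extension[OF pa pa _ q q] Ran_nonempty by blast
    then show ?thesis
      using eq \<open>V \<in> Dom\<close> V \<open>V \<notin> en G - Cn Ran G\<close> by (force simp: reduced_response_def)
  qed
  then have "V \<in> Cn Ran F"
    using V by (simp add: Cn_def)
  then show False
    using V by simp
qed

lemma sim_iff_reduced_response_eq:
  assumes F: "wf_sys Dom Ran F" and G: "wf_sys Dom Ran G"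
  shows "sim Ran F G \<longleftrightarrow>
    (\<forall>V\<in>Dom. \<forall>w\<in>PiE (Dom - {V}) Ran. reduced_response Ran (s, F) V w = reduced_response Ran (s, G) V w)"
    (is "_ \<longleftrightarrow> ?eq")
proof
  assume sim: "sim Ran F G"
  show ?eq
  proof (intro ballI)
    fix V w assume "V \<in> Dom" and w: "w \<in> PiE (Dom - {V}) Ran"
    show "reduced_response Ran (s, F) V w = reduced_response Ran (s, G) V w"
    proof (cases "V \<in> en F - Cn Ran F")
      case True
      then have "V \<in> en G - Cn Ran G" "sim_fn Ran F G V"
        using sim by (auto simp: sim_def)
      moreover have "pa F V \<subseteq> Dom - {V}" "pa G V \<subseteq> Dom - {V}"
        using F G True \<open>V \<in> en G - Cn Ran G\<close> by (auto simp: wf_sys_def)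
      then have "restrict w (pa F V) \<in> PiE (pa F V) Ran" "restrict w (pa G V) \<in> PiE (pa G V) Ran"
        using w by (auto simp: restrict_PiE_iff)
      ultimately show ?thesis
        using True by (simp add: reduced_response_def sim_fn_def)
    next
      case False
      then have "V \<notin> en G - Cn Ran G"
        using sim by (auto simp: sim_def)
      then show ?thesis
        using False by (simp only: reduced_response_def fst_conv snd_conv if_False)
    qed
  qed
next
  assume eq: ?eq
  have en_eq: "en F - Cn Ran F = en G - Cn Ran G"
    using nonconstant_if_reduced_response_eq[OF F eq] nonconstant_if_reduced_response_eq[OF G, of s F] eq
    by auto
  have "sim_fn Ran F G V" if V: "V \<in> en F - Cn Ran F" for V
    unfolding sim_fn_def
  proof (intro ballI impI)
    fix p q assume p: "p \<in> PiE (pa F V) Ran" and q: "q \<in> PiE (pa G V) Ran"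
      and agree: "\<forall>X\<in>pa F V \<inter> pa G V. p X = q X"
    have "V \<in> Dom" "pa F V \<subseteq> Dom - {V}" "pa G V \<subseteq> Dom - {V}"
      using F G V en_eq by (auto simp: wf_sys_def)
    then obtain w where "w \<in> PiE (Dom - {V}) Ran" "restrict w (pa F V) = p" "restrict w (pa G V) = q"
      using PiE_common_extension[OF _ _ _ p q agree] Ran_nonempty by blast
    then show "fn F V p = fn G V q"
      using eq \<open>V \<in> Dom\<close> V en_eq by (force simp: reduced_response_def)
  qed
  then show "sim Ran F G"
    using en_eq by (simp add: sim_def)
qed

lemma sim_refl: "wf_sys Dom Ran F \<Longrightarrow> sim Ran F F"
  using sim_iff_reduced_response_eq by blast

lemma sim_sym: "wf_sys Dom Ran F \<Longrightarrow> wf_sys Dom Ran G \<Longrightarrow> sim Ran F G \<Longrightarrow> sim Ran G F"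
  using sim_iff_reduced_response_eq[of F G undefined] sim_iff_reduced_response_eq[of G F undefined] by auto

lemma sim_trans:
  "wf_sys Dom Ran F \<Longrightarrow> wf_sys Dom Ran G \<Longrightarrow> wf_sys Dom Ran H \<Longrightarrow> sim Ran F G \<Longrightarrow> sim Ran G H \<Longrightarrow> sim Ran F H"
  using sim_iff_reduced_response_eq[of F G undefined] sim_iff_reduced_response_eq[of G H undefined]
    sim_iff_reduced_response_eq[of F H undefined]
  by auto

definition approx_class :: "('v \<Rightarrow> 'a) \<times> ('v, 'a) sys \<Rightarrow> ('v \<Rightarrow> 'a) \<times> ('v, 'a) sys set" where
  "approx_class p = (fst p, {G. wf_sys Dom Ran G \<and> sim Ran (snd p) G})"

lemma approx_class_eq_iff:
  assumes "wf_sys Dom Ran (snd p)" and "wf_sys Dom Ran (snd q)"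
  shows "approx_class p = approx_class q \<longleftrightarrow> fst p = fst q \<and> sim Ran (snd p) (snd q)"
proof
  assume "approx_class p = approx_class q"
  then have "fst p = fst q" "{G. wf_sys Dom Ran G \<and> sim Ran (snd p) G} = {G. wf_sys Dom Ran G \<and> sim Ran (snd q) G}"
    by (simp_all add: approx_class_def)
  moreover have "sim Ran (snd q) (snd q)"
    using assms(2) by (rule sim_refl)
  ultimately show "fst p = fst q \<and> sim Ran (snd p) (snd q)"
    using assms(2) by blast
next
  assume "fst p = fst q \<and> sim Ran (snd p) (snd q)"
  moreover have "sim Ran (snd p) G \<longleftrightarrow> sim Ran (snd q) G" if "wf_sys Dom Ran G" for G
    using calculation assms that sim_sym sim_trans by meson
  ultimately show "approx_class p = approx_class q"
    by (auto simp: approx_class_def)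
qed

lemma num_classes_eq_card:
  assumes T: "gen_team Dom Ran T"
  shows "num_classes Ran T = card (approx_class ` T)"
proof -
  let ?cell = "\<lambda>c. {q\<in>T. approx_class q = c}"
  have "(\<lambda>(s, F). {(t, G)\<in>T. t = s \<and> sim Ran F G}) p = ?cell (approx_class p)" if p: "p \<in> T" for p
  proof -
    have "approx_class p = approx_class q \<longleftrightarrow> fst p = fst q \<and> sim Ran (snd p) (snd q)" if "q \<in> T" for q
      using approx_class_eq_iff gen_teamD[OF T p] gen_teamD[OF T that] by blast
    then show ?thesis
      by (force simp: case_prod_beta)
  qed
  then have "(\<lambda>(s, F). {(t, G)\<in>T. t = s \<and> sim Ran F G}) ` T = ?cell ` approx_class ` T"
    by (simp add: image_image cong: image_cong)
  moreover have "inj_on ?cell (approx_class ` T)"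
    by (rule inj_onI) blast
  ultimately show ?thesis
    unfolding num_classes_def by (simp add: card_image)
qed

lemma fst_gen_restr:
  assumes X: "\<forall>p\<in>X. wf_sys Dom Ran (snd p)" and F: "wf_sys Dom Ran F"
  shows "fst ` gen_restr Ran X F = {s. approx_class (s, F) \<in> approx_class ` X}"
proof -
  have "approx_class (s, F) = approx_class p \<longleftrightarrow> s = fst p \<and> sim Ran (snd p) F" if "p \<in> X" for p s
  proof -
    have wf: "wf_sys Dom Ran (snd p)"
      using X that by blast
    then have "approx_class (s, F) = approx_class p \<longleftrightarrow> s = fst p \<and> sim Ran F (snd p)"
      using approx_class_eq_iff[of "(s, F)" p] F by simp
    also have "\<dots> \<longleftrightarrow> s = fst p \<and> sim Ran (snd p) F"
      using sim_sym F wf by blast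
    finally show ?thesis .
  qed
  then show ?thesis
    unfolding gen_restr_def by force
qed

lemma approx_g_iff:
  assumes X: "\<forall>p\<in>X. wf_sys Dom Ran (snd p)" and Y: "\<forall>p\<in>Y. wf_sys Dom Ran (snd p)"
  shows "approx_g Dom Ran X Y \<longleftrightarrow> approx_class ` X = approx_class ` Y"
proof
  assume "approx_class ` X = approx_class ` Y"
  then show "approx_g Dom Ran X Y"
    unfolding approx_g_def by (simp add: fst_gen_restr X Y)
next
  assume approx: "approx_g Dom Ran X Y"
  have "approx_class p \<in> approx_class ` Y \<longleftrightarrow> approx_class p \<in> approx_class ` X" if "p \<in> X \<union> Y" for p
  proof -
    have wf: "wf_sys Dom Ran (snd p)"
      using that X Y by blast
    then have "fst p \<in> fst ` gen_restr Ran Y (snd p) \<longleftrightarrow> fst p \<in> fst ` gen_restr Ran X (snd p)"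
      using approx unfolding approx_g_def by simp
    then show ?thesis
      using fst_gen_restr[OF X wf] fst_gen_restr[OF Y wf] by simp
  qed
  then show "approx_class ` X = approx_class ` Y"
    by blast
qed

lemma prec_g_iff:
  assumes X: "\<forall>p\<in>X. wf_sys Dom Ran (snd p)" and T: "\<forall>p\<in>T. wf_sys Dom Ran (snd p)"
  shows "prec_g Dom Ran X T \<longleftrightarrow> approx_class ` X \<subseteq> approx_class ` T"
proof
  assume "prec_g Dom Ran X T"
  then obtain R where R: "R \<subseteq> T" "approx_g Dom Ran X R"
    unfolding prec_g_def by blast
  then have "approx_class ` X = approx_class ` R"
    using approx_g_iff[OF X] T R(1) by blast
  with R(1) show "approx_class ` X \<subseteq> approx_class ` T"
    by (simp add: image_mono)
next
  assume sub: "approx_class ` X \<subseteq> approx_class ` T"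
  let ?R = "{q\<in>T. approx_class q \<in> approx_class ` X}"
  have "approx_class ` ?R = approx_class ` X"
  proof
    show "approx_class ` X \<subseteq> approx_class ` ?R"
      using sub by (force simp: image_iff)
  qed auto
  moreover have "?R \<subseteq> T"
    by (rule Collect_restrict)
  ultimately have "approx_g Dom Ran X ?R"
    using approx_g_iff[OF X, of ?R] T by blast
  with \<open>?R \<subseteq> T\<close> show "prec_g Dom Ran X T"
    unfolding prec_g_def by blast
qed

lemma sat_g_Theta_singleton:
  assumes "fst p \<in> assignments Dom Ran" and "A \<subseteq> assignments Dom Ran"
  shows "sat_g {p} (Theta Dom Ran A) \<longleftrightarrow> fst p \<in> A"
proof -
  have "finite A"
    using assms(2) finite_assignments by (rule finite_subset)
  then have "sat_g {p} (Theta Dom Ran A) \<longleftrightarrow> (\<exists>s\<in>A. \<forall>V\<in>Dom. fst p V = s V)"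
    unfolding Theta_def using finite_Dom by (simp add: sat_g_BigOr_singleton sat_g_BigAnd case_prod_beta)
  also have "\<dots> \<longleftrightarrow> fst p \<in> A"
    using assms assignments_eq_iff by blast
  finally show ?thesis .
qed

lemma flat_Theta: "A \<subseteq> assignments Dom Ran \<Longrightarrow> flat (Theta Dom Ran A)"
  unfolding Theta_def using finite_Dom finite_subset[OF _ finite_assignments]
  by (intro flat_BigOr) (auto intro!: flat_BigAnd simp: flat_Eq)

lemma sat_g_eta_singleton:
  assumes p: "gen_team Dom Ran {p}" and F: "wf_sys Dom Ran F" and V: "V \<in> en F - Cn Ran F"
  shows "sat_g {p} (eta Dom Ran F V) \<longleftrightarrow>
    (\<forall>w\<in>PiE (Dom - {V}) Ran. reduced_response Ran p V w = reduced_response Ran (fst p, F) V w)"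
proof -
  have "V \<in> Dom"
    using F V by (auto simp: wf_sys_def)
  then have "sat_g {p} (eta Dom Ran F V) \<longleftrightarrow>
      (\<forall>w\<in>PiE (Dom - {V}) Ran. response p V w = fn F V (restrict w (pa F V)))"
    unfolding eta_def using finite_PiE_Ran[of "Dom - {V}"]
    by (simp del: sat_g.simps(6) add: sat_g_BigAnd sat_g_Cf_all_but_Eq[OF p])
  then show ?thesis
    using response_eq_reduced_response p \<open>V \<in> Dom\<close> V
    by (simp add: gen_team_singleton_iff reduced_response_def[of Ran "(fst p, F)"])
qed

lemma sat_g_xi_singleton:
  assumes p: "gen_team Dom Ran {p}" and V: "V \<in> Dom"
  shows "sat_g {p} (xi Dom Ran V) \<longleftrightarrow> (\<forall>w\<in>PiE (Dom - {V}) Ran. response p V w = fst p V)"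
proof -
  let ?\<phi> = "\<lambda>v w. Or (Neg (Eq V v)) (Cf (ante (Dom - {V}) w) (Eq V v))"
  have fin: "finite {?\<phi> v w | v w. v \<in> Ran V \<and> w \<in> PiE (Dom - {V}) Ran}"
    using finite_Ran[OF V] finite_PiE_Ran[of "Dom - {V}"] by (intro finite_image_set2) auto
  have "sat_g {p} (?\<phi> v w) \<longleftrightarrow> fst p V \<noteq> v \<or> response p V w = v" for v w
    by (simp del: sat_g.simps(5,6) add: sat_g_Or_singleton sat_g_Cf_all_but_Eq[OF p V] case_prod_beta)
  moreover have "sat_g {p} (xi Dom Ran V) \<longleftrightarrow> (\<forall>v\<in>Ran V. \<forall>w\<in>PiE (Dom - {V}) Ran. sat_g {p} (?\<phi> v w))"
    unfolding xi_def sat_g_BigAnd[OF fin] by blast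
  moreover have "fst p V \<in> Ran V"
    using p V by (auto simp: gen_team_singleton_iff compatible_def assignments_def)
  ultimately show ?thesis
    by metis
qed

lemma sat_g_Phi_singleton:
  assumes p: "gen_team Dom Ran {p}" and F: "wf_sys Dom Ran F"
  shows "sat_g {p} (Phi Dom Ran F) \<longleftrightarrow> sim Ran (snd p) F"
proof -
  let ?N = "en F - Cn Ran F"
  define agree where "agree V \<longleftrightarrow>
    (\<forall>w\<in>PiE (Dom - {V}) Ran. reduced_response Ran p V w = reduced_response Ran (fst p, F) V w)" for V
  have N: "?N \<subseteq> Dom"
    using F by (auto simp: wf_sys_def)
  have eta: "sat_g {p} (eta Dom Ran F V) \<longleftrightarrow> agree V" if "V \<in> ?N" for V
    unfolding agree_def using sat_g_eta_singleton[OF p F that] .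
  have xi: "sat_g {p} (xi Dom Ran V) \<longleftrightarrow> agree V" if V: "V \<in> Dom - ?N" for V
  proof -
    have "reduced_response Ran (fst p, F) V w = fst p V" for w
      using V unfolding reduced_response_def by (simp only: Diff_iff fst_conv snd_conv if_False)
    then show ?thesis
      unfolding agree_def using V sat_g_xi_singleton[OF p] response_eq_reduced_response p
      by (simp add: gen_team_singleton_iff)
  qed
  have fin: "finite (eta Dom Ran F ` ?N \<union> xi Dom Ran ` (Dom - ?N))"
    using N finite_Dom by (auto intro: finite_subset)
  have "sat_g {p} (Phi Dom Ran F) \<longleftrightarrow>
      (\<forall>V\<in>?N. sat_g {p} (eta Dom Ran F V)) \<and> (\<forall>V\<in>Dom - ?N. sat_g {p} (xi Dom Ran V))"
    unfolding Phi_def sat_g_BigAnd[OF fin] by blast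
  also have "\<dots> \<longleftrightarrow> (\<forall>V\<in>Dom. agree V)"
    using eta xi N by blast
  also have "\<dots> \<longleftrightarrow> sim Ran (snd p) F"
    unfolding agree_def using sim_iff_reduced_response_eq[of "snd p" F "fst p"] p F
    by (simp add: gen_team_singleton_iff)
  finally show ?thesis .
qed

lemma flat_Phi:
  assumes F: "wf_sys Dom Ran F"
  shows "flat (Phi Dom Ran F)"
proof -
  have "flat (eta Dom Ran F V)" if "V \<in> Dom" for V
    unfolding eta_def using finite_PiE_Ran[of "Dom - {V}"]
    by (intro flat_BigAnd) (auto intro: flat_Cf flat_Eq)
  moreover have "flat (xi Dom Ran V)" if "V \<in> Dom" for V
  proof -
    have "finite {Or (Neg (Eq V v)) (Cf (ante (Dom - {V}) w) (Eq V v)) | v w. v \<in> Ran V \<and> w \<in> PiE (Dom - {V}) Ran}"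
      using finite_Ran[OF that] finite_PiE_Ran[of "Dom - {V}"] by (intro finite_image_set2) auto
    then show ?thesis
      unfolding xi_def by (intro flat_BigAnd) (auto intro: flat_Or flat_Neg flat_Cf flat_Eq)
  qed
  moreover have "en F \<subseteq> Dom"
    using F by (simp add: wf_sys_def)
  ultimately show ?thesis
    unfolding Phi_def using finite_Dom by (intro flat_BigAnd) (auto intro: finite_subset)
qed

lemma approx_class_eq_iff_response_eq:
  assumes "gen_team Dom Ran S" "p \<in> S" "q \<in> S"
  shows "approx_class p = approx_class q \<longleftrightarrow>
    (\<forall>V\<in>Dom. fst p V = fst q V) \<and> (\<forall>V\<in>Dom. \<forall>w\<in>PiE (Dom - {V}) Ran. response p V w = response q V w)"
proof -
  have p: "wf_sys Dom Ran (snd p)" "compatible Dom Ran (fst p) (snd p)"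
    and q: "wf_sys Dom Ran (snd q)" "compatible Dom Ran (fst q) (snd q)"
    using gen_teamD assms by blast+
  have "fst p = fst q \<longleftrightarrow> (\<forall>V\<in>Dom. fst p V = fst q V)"
    using p(2) q(2) by (intro assignments_eq_iff[where Ran = Ran]) (simp_all add: compatible_def)
  moreover have "sim Ran (snd p) (snd q) \<longleftrightarrow>
      (\<forall>V\<in>Dom. \<forall>w\<in>PiE (Dom - {V}) Ran. response p V w = response q V w)" if "fst p = fst q"
  proof -
    have "(fst p, snd q) = q"
      using that by (simp add: prod_eq_iff)
    then show ?thesis
      using sim_iff_reduced_response_eq[OF p(1) q(1), of "fst p"] response_eq_reduced_response p q
      by simp
  qed
  ultimately show ?thesis
    using approx_class_eq_iff[OF p(1) q(1)] by blast
qed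

lemma sat_g_chi:
  assumes S: "gen_team Dom Ran S"
  shows "sat_g S (chi Dom Ran) \<longleftrightarrow> card (approx_class ` S) \<le> 1"
proof -
  let ?Cfs = "{Cf (ante (Dom - {V}) w) (Dep V) | V w. V \<in> Dom \<and> w \<in> PiE (Dom - {V}) Ran}"
  have "?Cfs = (\<Union>V\<in>Dom. (\<lambda>w. Cf (ante (Dom - {V}) w) (Dep V)) ` PiE (Dom - {V}) Ran)"
    by blast
  then have fin: "finite ?Cfs"
    using finite_Dom finite_PiE_Ran by simp
  have "sat_g S (BigAnd Dom Ran ?Cfs) \<longleftrightarrow>
      (\<forall>V\<in>Dom. \<forall>w\<in>PiE (Dom - {V}) Ran. sat_g S (Cf (ante (Dom - {V}) w) (Dep V)))"
    unfolding sat_g_BigAnd[OF fin] by blast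
  also have "\<dots> \<longleftrightarrow>
      (\<forall>V\<in>Dom. \<forall>w\<in>PiE (Dom - {V}) Ran. \<forall>p\<in>S. \<forall>q\<in>S. response p V w = response q V w)"
    by (intro ball_cong refl) (simp only: sat_g_Cf_all_but_Dep[OF S])
  finally have Cfs: "sat_g S (BigAnd Dom Ran ?Cfs) \<longleftrightarrow> \<dots>" .
  have Deps: "sat_g S (BigAnd Dom Ran (Dep ` Dom)) \<longleftrightarrow> (\<forall>V\<in>Dom. \<forall>p\<in>S. \<forall>q\<in>S. fst p V = fst q V)"
    using finite_Dom by (simp add: sat_g_BigAnd case_prod_beta)
  have "sat_g S (chi Dom Ran) \<longleftrightarrow>
      (\<forall>V\<in>Dom. \<forall>w\<in>PiE (Dom - {V}) Ran. \<forall>p\<in>S. \<forall>q\<in>S. response p V w = response q V w) \<and>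
      (\<forall>V\<in>Dom. \<forall>p\<in>S. \<forall>q\<in>S. fst p V = fst q V)"
    unfolding chi_def sat_g.simps(4) Cfs Deps ..
  also have "\<dots> \<longleftrightarrow> (\<forall>p\<in>S. \<forall>q\<in>S. (\<forall>V\<in>Dom. fst p V = fst q V) \<and>
      (\<forall>V\<in>Dom. \<forall>w\<in>PiE (Dom - {V}) Ran. response p V w = response q V w))"
    by blast
  also have "\<dots> \<longleftrightarrow> (\<forall>p\<in>S. \<forall>q\<in>S. approx_class p = approx_class q)"
    by (intro ball_cong refl) (simp only: approx_class_eq_iff_response_eq[OF S])
  also have "\<dots> \<longleftrightarrow> card (approx_class ` S) \<le> 1"
    using gen_team_finite[OF S] by (simp add: card_le_Suc0_iff_eq)
  finally show ?thesis .
qed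

lemma sat_g_chik:
  assumes "gen_team Dom Ran S"
  shows "sat_g S (chik Dom Ran k) \<longleftrightarrow> card (approx_class ` S) \<le> k"
  using assms
proof (induction k arbitrary: S)
  case 0
  then show ?case
    using gen_team_finite by (simp add: chik_def sat_g_Bot)
next
  case (Suc k)
  show ?case
  proof (cases k)
    case 0
    then show ?thesis
      using sat_g_chi[OF Suc.prems] by (simp add: chik_def)
  next
    case (Suc k')
    then have "chik Dom Ran (Suc k) = Or (chi Dom Ran) (chik Dom Ran k)"
      by (simp add: chik_def)
    then have "sat_g S (chik Dom Ran (Suc k)) \<longleftrightarrow>
        (\<exists>S1 S2. S = S1 \<union> S2 \<and> sat_g S1 (chi Dom Ran) \<and> sat_g S2 (chik Dom Ran k))"
      by (simp only: sat_g.simps(5))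
    also have "\<dots> \<longleftrightarrow>
        (\<exists>S1 S2. S = S1 \<union> S2 \<and> card (approx_class ` S1) \<le> 1 \<and> card (approx_class ` S2) \<le> k)"
      using sat_g_chi Suc.IH gen_team_subset[OF Suc.prems] by (intro ex_cong1 conj_cong refl) auto
    also have "\<dots> \<longleftrightarrow> card (approx_class ` S) \<le> Suc k"
      by (rule card_image_le_Suc_iff[OF gen_team_finite[OF Suc.prems], symmetric])
    finally show ?thesis .
  qed
qed

definition unmatched_systems :: "(('v \<Rightarrow> 'a) \<times> ('v, 'a) sys) set \<Rightarrow> ('v, 'a) fml" where
  "unmatched_systems T = BigOr Dom Ran {And (Theta Dom Ran {s}) (Phi Dom Ran F) | s F.
     s \<in> fst ` T \<and> wf_sys Dom Ran F \<and> \<not> prec_g Dom Ran {(s, F)} T}"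

lemma Xi_g_eq: "Xi_g Dom Ran T = Or (chik Dom Ran (num_classes Ran T - 1))
    (Or (Theta Dom Ran (assignments Dom Ran - fst ` T)) (unmatched_systems T))"
  by (simp add: Xi_g_def unmatched_systems_def)

lemma finite_unmatched_systems_disjuncts:
  assumes "gen_team Dom Ran T"
  shows "finite {And (Theta Dom Ran {s}) (Phi Dom Ran F) | s F.
     s \<in> fst ` T \<and> wf_sys Dom Ran F \<and> \<not> prec_g Dom Ran {(s, F)} T}"
proof (rule finite_subset)
  show "finite ((\<lambda>(s, F). And (Theta Dom Ran {s}) (Phi Dom Ran F)) ` (fst ` T \<times> {F. wf_sys Dom Ran F}))"
    using gen_team_finite[OF assms] finite_wf_sys by simp
qed fast

lemma flat_unmatched_systems:
  assumes T: "gen_team Dom Ran T"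
  shows "flat (unmatched_systems T)"
proof -
  have "fst ` T \<subseteq> assignments Dom Ran"
    using gen_teamD[OF T] by (auto simp: compatible_def)
  then have "flat (And (Theta Dom Ran {s}) (Phi Dom Ran F))" if "s \<in> fst ` T" "wf_sys Dom Ran F" for s F
    using that by (intro flat_And flat_Theta flat_Phi) auto
  then show ?thesis
    unfolding unmatched_systems_def by (intro flat_BigOr[OF finite_unmatched_systems_disjuncts[OF T]]) blast
qed

lemma sat_g_unmatched_systems_singleton:
  assumes p: "gen_team Dom Ran {p}" and T: "gen_team Dom Ran T"
  shows "sat_g {p} (unmatched_systems T) \<longleftrightarrow> fst p \<in> fst ` T \<and> approx_class p \<notin> approx_class ` T"
proof -
  have wf_T: "\<forall>q\<in>T. wf_sys Dom Ran (snd q)" and wf_p: "wf_sys Dom Ran (snd p)"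
    using gen_teamD[OF T] p by (auto simp: gen_team_singleton_iff)
  have asg: "fst p \<in> assignments Dom Ran" "fst ` T \<subseteq> assignments Dom Ran"
    using gen_teamD[OF T] p by (auto simp: gen_team_singleton_iff compatible_def)
  have disjunct: "sat_g {p} (And (Theta Dom Ran {s}) (Phi Dom Ran F)) \<longleftrightarrow> fst p = s \<and> sim Ran (snd p) F"
    if "s \<in> fst ` T" "wf_sys Dom Ran F" for s F
    using that asg sat_g_Theta_singleton[OF asg(1), of "{s}"] sat_g_Phi_singleton[OF p] by auto
  have prec: "prec_g Dom Ran {(s, F)} T \<longleftrightarrow> approx_class (s, F) \<in> approx_class ` T"
    if "wf_sys Dom Ran F" for s F
  proof -
    have "\<forall>q\<in>{(s, F)}. wf_sys Dom Ran (snd q)"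
      using that by simp
    from prec_g_iff[OF this wf_T] show ?thesis
      by simp
  qed
  have same_class: "approx_class (fst p, F) = approx_class p"
    if "wf_sys Dom Ran F" "sim Ran (snd p) F" for F
    using approx_class_eq_iff[of "(fst p, F)" p] that wf_p sim_sym by auto
  have "sat_g {p} (unmatched_systems T) \<longleftrightarrow> (\<exists>s F. s \<in> fst ` T \<and> wf_sys Dom Ran F \<and>
      approx_class (s, F) \<notin> approx_class ` T \<and> fst p = s \<and> sim Ran (snd p) F)"
    unfolding unmatched_systems_def sat_g_BigOr_singleton[OF finite_unmatched_systems_disjuncts[OF T]]
    using disjunct prec by blast
  also have "\<dots> \<longleftrightarrow> fst p \<in> fst ` T \<and> approx_class p \<notin> approx_class ` T"
    using same_class wf_p sim_refl by (metis prod.collapse)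
  finally show ?thesis .
qed

lemma sat_g_unmatched_classes_singleton:
  assumes p: "gen_team Dom Ran {p}" and T: "gen_team Dom Ran T"
  shows "sat_g {p} (Or (Theta Dom Ran (assignments Dom Ran - fst ` T)) (unmatched_systems T)) \<longleftrightarrow>
    approx_class p \<notin> approx_class ` T"
proof -
  have asg: "fst p \<in> assignments Dom Ran" "fst ` T \<subseteq> assignments Dom Ran"
    using p gen_teamD[OF T] by (auto simp: gen_team_singleton_iff compatible_def)
  have "approx_class p \<in> approx_class ` T \<Longrightarrow> fst p \<in> fst ` T"
    by (auto simp: approx_class_def)
  moreover have "sat_g {p} (Or (Theta Dom Ran (assignments Dom Ran - fst ` T)) (unmatched_systems T)) \<longleftrightarrow>
      fst p \<notin> fst ` T \<or> (fst p \<in> fst ` T \<and> approx_class p \<notin> approx_class ` T)"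
    using sat_g_Theta_singleton[OF asg(1), of "assignments Dom Ran - fst ` T"] asg
      sat_g_unmatched_systems_singleton[OF p T]
    by (simp del: sat_g.simps(5) add: sat_g_Or_singleton)
  ultimately show ?thesis
    by blast
qed

lemma sat_g_Xi_g_iff:
  assumes S: "gen_team Dom Ran S" and T: "gen_team Dom Ran T" and "T \<noteq> {}"
  shows "sat_g S (Xi_g Dom Ran T) \<longleftrightarrow> \<not> approx_class ` T \<subseteq> approx_class ` S"
proof -
  let ?K = "approx_class ` T"
  let ?rest = "Or (Theta Dom Ran (assignments Dom Ran - fst ` T)) (unmatched_systems T)"
  have "finite ?K"
    using gen_team_finite[OF T] by simp
  moreover have "0 < card ?K"
    using calculation \<open>T \<noteq> {}\<close> by (simp add: card_gt_0_iff)
  ultimately have chik: "sat_g U (chik Dom Ran (num_classes Ran T - 1)) \<longleftrightarrow> card (approx_class ` U) < card ?K"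
    if "U \<subseteq> S" for U
    using sat_g_chik[OF gen_team_subset[OF S that], of "card ?K - 1"] num_classes_eq_card[OF T] by auto
  have "fst ` T \<subseteq> assignments Dom Ran"
    using gen_teamD[OF T] by (auto simp: compatible_def)
  then have flat_rest: "flat ?rest"
    by (intro flat_Or flat_Theta flat_unmatched_systems[OF T]) auto
  have rest_singleton: "sat_g {p} ?rest \<longleftrightarrow> approx_class p \<notin> ?K" if "p \<in> S" for p
    by (rule sat_g_unmatched_classes_singleton[OF gen_team_subset[OF S] T]) (use that in simp)
  have rest: "sat_g U ?rest \<longleftrightarrow> (\<forall>p\<in>U. approx_class p \<notin> ?K)" if "U \<subseteq> S" for U
    unfolding flatD[OF flat_rest, of U] using rest_singleton that by blast
  have "sat_g S (Xi_g Dom Ran T) \<longleftrightarrow> (\<exists>S1 S2. S = S1 \<union> S2 \<and>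
      sat_g S1 (chik Dom Ran (num_classes Ran T - 1)) \<and> sat_g S2 ?rest)"
    by (simp only: Xi_g_eq) (rule sat_g.simps(5))
  also have "\<dots> \<longleftrightarrow>
      (\<exists>S1 S2. S = S1 \<union> S2 \<and> card (approx_class ` S1) < card ?K \<and> (\<forall>p\<in>S2. approx_class p \<notin> ?K))"
    using chik rest by (intro ex_cong1 conj_cong refl) auto
  also have "\<dots> \<longleftrightarrow> card (approx_class ` S \<inter> ?K) < card ?K"
    by (rule ex_split_card_image_less_iff[OF gen_team_finite[OF S]])
  also have "\<dots> \<longleftrightarrow> \<not> ?K \<subseteq> approx_class ` S"
    by (rule card_Int_less_iff_not_subset[OF \<open>finite ?K\<close>])
  finally show ?thesis .
qed

lemma sat_g_Xi_g_iff_not_prec_g: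
  assumes "gen_team Dom Ran S" and "gen_team Dom Ran T" and "T \<noteq> {}"
  shows "sat_g S (Xi_g Dom Ran T) \<longleftrightarrow> \<not> prec_g Dom Ran T S"
proof -
  have "\<forall>p\<in>S. wf_sys Dom Ran (snd p)" "\<forall>p\<in>T. wf_sys Dom Ran (snd p)"
    using gen_teamD assms(1,2) by blast+
  then show ?thesis
    using sat_g_Xi_g_iff[OF assms] prec_g_iff by simp
qed

lemma prec_c_iff_prec_g_to_gen:
  assumes S: "causal_team Dom Ran S F" and T: "causal_team Dom Ran T G" and "T \<noteq> {}"
  shows "prec_c Ran T G S F \<longleftrightarrow> prec_g Dom Ran (to_gen T G) (to_gen S F)"
proof -
  have wf: "wf_sys Dom Ran F" "wf_sys Dom Ran G"
    using S T by (simp_all add: causal_team_def)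
  have "prec_g Dom Ran (to_gen T G) (to_gen S F) \<longleftrightarrow>
      approx_class ` to_gen T G \<subseteq> approx_class ` to_gen S F"
    using prec_g_iff[of "to_gen T G" "to_gen S F"] wf by (simp add: to_gen_eq_image)
  also have "\<dots> \<longleftrightarrow> (\<forall>s\<in>T. approx_class (s, G) \<in> approx_class ` to_gen S F)"
    by (simp only: to_gen_eq_image[of T] image_image image_subset_iff)
  also have "\<dots> \<longleftrightarrow> (\<forall>s\<in>T. s \<in> S \<and> sim Ran G F)"
  proof (intro ball_cong refl iffI)
    fix s assume "approx_class (s, G) \<in> approx_class ` to_gen S F"
    then obtain t where "t \<in> S" "approx_class (s, G) = approx_class (t, F)"
      by (auto simp: to_gen_eq_image)
    then show "s \<in> S \<and> sim Ran G F"
      using approx_class_eq_iff[of "(s, G)" "(t, F)"] wf by simp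
  next
    fix s assume "s \<in> S \<and> sim Ran G F"
    then have "approx_class (s, G) = approx_class (s, F)"
      using approx_class_eq_iff[of "(s, G)" "(s, F)"] wf by simp
    then show "approx_class (s, G) \<in> approx_class ` to_gen S F"
      using \<open>s \<in> S \<and> sim Ran G F\<close> by (auto simp: to_gen_eq_image)
  qed
  also have "\<dots> \<longleftrightarrow> prec_c Ran T G S F"
    using \<open>T \<noteq> {}\<close> by (auto simp: prec_c_def approx_c_def)
  finally show ?thesis
    by simp
qed

end

theorem lemma5p5:
  fixes Dom :: "'v set" and Ran :: "'v \<Rightarrow> 'a set"
  assumes "signature Dom Ran"
  shows "(\<forall>S F T G. causal_team Dom Ran S F \<longrightarrow> causal_team Dom Ran T G \<longrightarrow> T \<noteq> {} \<longrightarrow>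
            (sat_c S F (Xi_c Dom Ran T G) \<longleftrightarrow> \<not> prec_c Ran T G S F))
       \<and> (\<forall>S T. gen_team Dom Ran S \<longrightarrow> gen_team Dom Ran T \<longrightarrow> T \<noteq> {} \<longrightarrow>
            (sat_g S (Xi_g Dom Ran T) \<longleftrightarrow> \<not> prec_g Dom Ran T S))"
proof -
  interpret sigma Dom Ran
    by unfold_locales (rule assms)
  have causal: "sat_c S F (Xi_c Dom Ran T G) \<longleftrightarrow> \<not> prec_c Ran T G S F"
    if S: "causal_team Dom Ran S F" and T: "causal_team Dom Ran T G" and "T \<noteq> {}" for S F T G
  proof -
    have "to_gen T G \<noteq> {}"
      using \<open>T \<noteq> {}\<close> by (simp add: to_gen_eq_image)
    then show ?thesis
      unfolding Xi_c_def sat_c_iff_sat_g_to_gen prec_c_iff_prec_g_to_gen[OF S T \<open>T \<noteq> {}\<close>]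
      by (rule sat_g_Xi_g_iff_not_prec_g[OF gen_team_to_gen[OF S] gen_team_to_gen[OF T]])
  qed
  show ?thesis
    by (simp add: causal sat_g_Xi_g_iff_not_prec_g)
qed

end
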